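(* Let $\Gamma$ be an Arf numerical semigroup with multiplicity $e>1$ and conductor $c$, let $e'\in\Gamma\setminus\{0\}$, $\Gamma_{e'}=\{0\}\cup(e'+\Gamma)$, and $c'=c+e'$ (the conductor of $\Gamma_{e'}$). Then \[ \delta^2_{\Gamma_{e'}}(c'+e'-1)=\begin{cases}4 & \text{if } e'=e,\\ 5 & \text{otherwise.}\end{cases} \]
   Context: A numerical semigroup is a subset $\Gamma\subseteq\mathbb N$ containing $0$, closed under addition, with finite complement; write $\Gamma=\{0=\rho_1<\rho_2<\cdots\}$; multiplicity $e=\rho_2$; conductor = least $c$ with $c+\mathbb N\subseteq\Gamma$. $\Gamma$ is Arf if $\rho_i+\rho_j-\rho_k\in\Gamma$ for all $i\ge j\ge k$. For a numerical semigroup $S$: $D_S(x)=\{s\in S:x-s\in S\}$ and $\delta^2_S(m)=\min\{|D_S(m_1)\cup D_S(m_2)|: m\le m_1<m_2,\ m_i\in S\}$. *)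

theory Defs
  imports Main
begin

definition numerical_semigroup :: "nat set \<Rightarrow> bool" where
  "numerical_semigroup S \<longleftrightarrow> 0 \<in> S \<and> (\<forall>x\<in>S. \<forall>y\<in>S. x + y \<in> S) \<and> finite (UNIV - S)"

definition arf :: "nat set \<Rightarrow> bool" where
  "arf S \<longleftrightarrow> (\<forall>x\<in>S. \<forall>y\<in>S. \<forall>z\<in>S. x \<ge> y \<and> y \<ge> z \<longrightarrow> x + y - z \<in> S)"

definition multiplicity_ns :: "nat set \<Rightarrow> nat" where
  "multiplicity_ns S = (LEAST x. x \<in> S \<and> x \<noteq> 0)"

definition conductor :: "nat set \<Rightarrow> nat" where
  "conductor S = (LEAST c. \<forall>n. c \<le> n \<longrightarrow> n \<in> S)"

definition D_set :: "nat set \<Rightarrow> nat \<Rightarrow> nat set" where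
  "D_set S x = {s \<in> S. s \<le> x \<and> x - s \<in> S}"

definition delta2 :: "nat set \<Rightarrow> nat \<Rightarrow> nat" where
  "delta2 S m = (LEAST k. \<exists>m1 m2. m1 \<in> S \<and> m2 \<in> S \<and> m \<le> m1 \<and> m1 < m2
                   \<and> k = card (D_set S m1 \<union> D_set S m2))"

definition shifted_sg :: "nat set \<Rightarrow> nat \<Rightarrow> nat set" where
  "shifted_sg S e' = {0} \<union> ((+) e' ` S)"

end

theory Submission
  imports Defs
begin

text \<open>A nonzero proper divisor s of x in the shifted semigroup has the form s = a + e' with
  x = a + b + 2e' for some a, b in \<Gamma>, so D(x) is governed by the ways of writing x - 2e' as a sum
  of two elements of \<Gamma>. For x = c - 1 + 2e' there is no such way, since c - 1 is a gap; for
  x = c - 1 + e + 2e' the Arf property leaves only the trivial ones (0 plus something), because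
  a + b - e lies in \<Gamma> whenever a, b are nonzero. These two witnesses give D-sets
  {0, x} and {0, e', c - 1 + e + e', x}, whose union has 4 or 5 elements according as e' = e or
  not. Conversely, any admissible pair m1 < m2 has 0, e', m1, m2 and m2 - e' in the union, and
  when e' > e one finds a fifth element.\<close>

lemma numerical_semigroup_eventually_mem:
  assumes "numerical_semigroup S"
  obtains B where "\<And>n. B \<le> n \<Longrightarrow> n \<in> S"
proof -
  have "finite (UNIV - S)" using assms unfolding numerical_semigroup_def by blast
  then obtain M where M: "\<forall>x\<in>UNIV - S. x \<le> M"
    using finite_nat_set_iff_bounded_le by blast
  show ?thesis
  proof (rule that)
    fix n assume "Suc M \<le> n"
    show "n \<in> S"
    proof (rule ccontr)
      assume "n \<notin> S"
      with M have "n \<le> M" by blast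
      with \<open>Suc M \<le> n\<close> show False by simp
    qed
  qed
qed

lemma conductor_le_mem:
  assumes "numerical_semigroup S" and "conductor S \<le> n"
  shows "n \<in> S"
proof -
  obtain B where B: "\<And>n. B \<le> n \<Longrightarrow> n \<in> S"
    using numerical_semigroup_eventually_mem[OF assms(1)] by blast
  have "\<forall>n. conductor S \<le> n \<longrightarrow> n \<in> S"
    unfolding conductor_def by (rule LeastI[of _ B]) (use B in blast)
  with assms(2) show ?thesis by blast
qed

lemma conductor_minus_one_not_mem:
  assumes "numerical_semigroup S" and "0 < conductor S"
  shows "conductor S - 1 \<notin> S"
proof
  assume "conductor S - 1 \<in> S"
  then have "\<forall>n. conductor S - 1 \<le> n \<longrightarrow> n \<in> S"
  proof (intro allI impI)
    fix n assume "conductor S - 1 \<le> n"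
    then consider "n = conductor S - 1" | "conductor S \<le> n" by linarith
    then show "n \<in> S" using \<open>conductor S - 1 \<in> S\<close> conductor_le_mem[OF assms(1)] by cases auto
  qed
  then have "conductor S \<le> conductor S - 1"
    unfolding conductor_def by (rule Least_le)
  with assms(2) show False by simp
qed

lemma multiplicity_ns_mem:
  assumes "numerical_semigroup S"
  shows "multiplicity_ns S \<in> S" and "multiplicity_ns S \<noteq> 0"
proof -
  obtain B where B: "\<And>n. B \<le> n \<Longrightarrow> n \<in> S"
    using numerical_semigroup_eventually_mem[OF assms] by blast
  have "multiplicity_ns S \<in> S \<and> multiplicity_ns S \<noteq> 0"
    unfolding multiplicity_ns_def by (rule LeastI[of _ "Suc B"]) (use B in auto)
  then show "multiplicity_ns S \<in> S" and "multiplicity_ns S \<noteq> 0" by blast+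
qed

lemma multiplicity_ns_le:
  assumes "x \<in> S" and "x \<noteq> 0"
  shows "multiplicity_ns S \<le> x"
  unfolding multiplicity_ns_def by (rule Least_le) (use assms in blast)

lemma conductor_pos:
  assumes "numerical_semigroup S" and "1 < multiplicity_ns S"
  shows "0 < conductor S"
proof (rule ccontr)
  assume "\<not> 0 < conductor S"
  then have "1 \<in> S" using conductor_le_mem[OF assms(1)] by simp
  then have "multiplicity_ns S \<le> 1" by (rule multiplicity_ns_le) simp
  with assms(2) show False by simp
qed

lemma add_ne_conductor_minus_one:
  assumes "numerical_semigroup S" and "0 < conductor S" and "a \<in> S" and "b \<in> S"
  shows "a + b \<noteq> conductor S - 1"
proof -
  have "a + b \<in> S" using assms(1,3,4) unfolding numerical_semigroup_def by blast
  then show ?thesis using conductor_minus_one_not_mem[OF assms(1,2)] by auto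
qed

lemma arf_add_minus_multiplicity_mem:
  assumes "numerical_semigroup S" and "arf S"
    and "a \<in> S" and "b \<in> S" and "a \<noteq> 0" and "b \<noteq> 0"
  shows "a + b - multiplicity_ns S \<in> S"
proof -
  let ?e = "multiplicity_ns S"
  have arf: "\<And>x y. x \<in> S \<Longrightarrow> y \<in> S \<Longrightarrow> y \<le> x \<Longrightarrow> ?e \<le> y \<Longrightarrow> x + y - ?e \<in> S"
    using assms(2) multiplicity_ns_mem[OF assms(1)] unfolding arf_def by blast
  have "?e \<le> a" "?e \<le> b" using multiplicity_ns_le assms(3-6) by auto
  show ?thesis
  proof (cases "b \<le> a")
    case True
    then show ?thesis by (rule arf[OF assms(3,4) _ \<open>?e \<le> b\<close>])
  next
    case False
    then have "b + a - ?e \<in> S" by (intro arf[OF assms(4,3) _ \<open>?e \<le> a\<close>]) simp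
    then show ?thesis by (simp add: add.commute)
  qed
qed

lemma arf_add_ne_conductor_minus_one_plus_multiplicity:
  assumes "numerical_semigroup S" and "arf S" and "0 < conductor S"
    and "a \<in> S" and "b \<in> S" and "a \<noteq> 0" and "b \<noteq> 0"
  shows "a + b \<noteq> conductor S - 1 + multiplicity_ns S"
proof
  assume "a + b = conductor S - 1 + multiplicity_ns S"
  then have "a + b - multiplicity_ns S = conductor S - 1" by simp
  then show False
    using arf_add_minus_multiplicity_mem[OF assms(1,2,4-7)] conductor_minus_one_not_mem[OF assms(1,3)]
    by simp
qed

lemma mem_shifted_sg: "x \<in> shifted_sg S e' \<longleftrightarrow> x = 0 \<or> (e' \<le> x \<and> x - e' \<in> S)"
  unfolding shifted_sg_def by force

lemma finite_D_set: "finite (D_set S x)"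
  unfolding D_set_def by (rule finite_subset[of _ "{..x}"]) auto

lemma D_set_shifted_sg_trivial:
  assumes "x \<in> shifted_sg S e'"
  shows "0 \<in> D_set (shifted_sg S e') x" and "x \<in> D_set (shifted_sg S e') x"
  using assms unfolding D_set_def shifted_sg_def by auto

lemma D_set_shifted_sgE:
  assumes "s \<in> D_set (shifted_sg S e') x" and "s \<noteq> 0" and "s \<noteq> x"
  obtains a b where "a \<in> S" "b \<in> S" "s = a + e'" "x = a + b + 2 * e'"
proof
  from assms have s: "e' \<le> s" "s - e' \<in> S" "e' \<le> x - s" "x - s - e' \<in> S" "s \<le> x"
    unfolding D_set_def mem_shifted_sg by auto
  then show "s - e' \<in> S" "x - s - e' \<in> S" "s = s - e' + e'" "x = s - e' + (x - s - e') + 2 * e'"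
    by auto
qed

lemma add_mem_D_set_shifted_sg:
  assumes "a \<in> S" and "b \<in> S"
  shows "a + e' \<in> D_set (shifted_sg S e') (a + b + 2 * e')"
proof -
  have "a + b + 2 * e' - (a + e') = b + e'" by simp
  with assms show ?thesis unfolding D_set_def mem_shifted_sg by auto
qed

lemma D_set_shifted_sg_conductor:
  assumes "numerical_semigroup \<Gamma>" and "0 < conductor \<Gamma>" and "e' \<noteq> 0"
  defines "x \<equiv> conductor \<Gamma> - 1 + 2 * e'"
  shows "D_set (shifted_sg \<Gamma> e') x = {0, x}"
proof (intro equalityI subsetI)
  fix s assume s: "s \<in> D_set (shifted_sg \<Gamma> e') x"
  show "s \<in> {0, x}"
  proof (rule ccontr)
    assume "s \<notin> {0, x}"
    with s obtain a b where "a \<in> \<Gamma>" "b \<in> \<Gamma>" "x = a + b + 2 * e'"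
      by (auto elim: D_set_shifted_sgE)
    with add_ne_conductor_minus_one[OF assms(1,2)] show False unfolding x_def by fastforce
  qed
next
  have "x \<in> shifted_sg \<Gamma> e'"
    using conductor_le_mem[OF assms(1)] assms(2,3) unfolding x_def mem_shifted_sg by simp
  then show "s \<in> D_set (shifted_sg \<Gamma> e') x" if "s \<in> {0, x}" for s
    using that D_set_shifted_sg_trivial by blast
qed

lemma D_set_shifted_sg_conductor_plus_multiplicity:
  assumes "numerical_semigroup \<Gamma>" and "arf \<Gamma>" and "0 < conductor \<Gamma>"
  defines "g \<equiv> conductor \<Gamma> - 1 + multiplicity_ns \<Gamma>"
  shows "D_set (shifted_sg \<Gamma> e') (g + 2 * e') = {0, e', g + e', g + 2 * e'}"
proof (intro equalityI subsetI)
  fix s assume s: "s \<in> D_set (shifted_sg \<Gamma> e') (g + 2 * e')"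
  show "s \<in> {0, e', g + e', g + 2 * e'}"
  proof (rule ccontr)
    assume "s \<notin> {0, e', g + e', g + 2 * e'}"
    with s obtain a b where ab: "a \<in> \<Gamma>" "b \<in> \<Gamma>" "s = a + e'" "a + b = g"
      by (auto elim: D_set_shifted_sgE)
    moreover have "a \<noteq> 0" "b \<noteq> 0"
      using \<open>s \<notin> _\<close> ab by auto
    ultimately show False
      using arf_add_ne_conductor_minus_one_plus_multiplicity[OF assms(1-3)] unfolding g_def by blast
  qed
next
  have "0 \<in> \<Gamma>" using assms(1) unfolding numerical_semigroup_def by blast
  moreover have "conductor \<Gamma> \<le> g"
    using assms(3) multiplicity_ns_mem(2)[OF assms(1)] unfolding g_def by linarith
  then have "g \<in> \<Gamma>" "g + e' \<in> \<Gamma>" using conductor_le_mem[OF assms(1)] by auto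
  ultimately have "0 + e' \<in> D_set (shifted_sg \<Gamma> e') (0 + g + 2 * e')"
    and "g + e' \<in> D_set (shifted_sg \<Gamma> e') (g + 0 + 2 * e')"
    using add_mem_D_set_shifted_sg by blast+
  moreover have "g + 2 * e' \<in> shifted_sg \<Gamma> e'"
    using \<open>g + e' \<in> \<Gamma>\<close> unfolding mem_shifted_sg by (simp add: add.commute)
  ultimately show "s \<in> D_set (shifted_sg \<Gamma> e') (g + 2 * e')"
    if "s \<in> {0, e', g + e', g + 2 * e'}" for s
    using that D_set_shifted_sg_trivial by auto
qed

context
  fixes \<Gamma> :: "nat set" and e' m1 m2 :: nat
  assumes ns: "numerical_semigroup \<Gamma>" and c_pos: "0 < conductor \<Gamma>" and e'_nonzero: "e' \<noteq> 0"
    and m1: "m1 \<in> shifted_sg \<Gamma> e'" "conductor \<Gamma> + e' + e' - 1 \<le> m1"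
    and m2: "m2 \<in> shifted_sg \<Gamma> e'" "m1 < m2"
begin

private abbreviation "U \<equiv> D_set (shifted_sg \<Gamma> e') m1 \<union> D_set (shifted_sg \<Gamma> e') m2"

lemma D_set_union_contains: "{0, e', m2 - e', m1, m2} \<subseteq> U"
proof -
  have "0 \<in> \<Gamma>" using ns unfolding numerical_semigroup_def by blast
  moreover have "m2 - 2 * e' \<in> \<Gamma>" using conductor_le_mem[OF ns] m1 m2 by simp
  ultimately have "0 + e' \<in> D_set (shifted_sg \<Gamma> e') (0 + (m2 - 2 * e') + 2 * e')"
    and "(m2 - 2 * e') + e' \<in> D_set (shifted_sg \<Gamma> e') ((m2 - 2 * e') + 0 + 2 * e')"
    using add_mem_D_set_shifted_sg by blast+
  moreover have "m2 - 2 * e' + 2 * e' = m2" "m2 - 2 * e' + e' = m2 - e'"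
    using m1 m2 c_pos by auto
  ultimately show ?thesis using D_set_shifted_sg_trivial m1 m2 by auto
qed

private lemma e'_less_m1: "e' < m1"
  using m1(2) c_pos e'_nonzero by linarith

lemma card_D_set_union_ge_4: "4 \<le> card U"
proof -
  have "card {0, e', m1, m2} \<le> card U"
    using D_set_union_contains by (intro card_mono) (auto simp: finite_D_set)
  moreover have "card {0, e', m1, m2} = 4"
    using e'_nonzero e'_less_m1 m2(2) by auto
  ultimately show ?thesis by simp
qed

text \<open>The fifth element is m2 - e', or m1 - e', or, in the extremal case m1 = c - 1 + 2e',
  m2 = c - 1 + 3e', the element e + e' of D(m2), which uses e < e'.\<close>

lemma D_set_union_fifth_element:
  assumes "multiplicity_ns \<Gamma> < e'"
  obtains y where "y \<in> U" "y \<notin> {0, e', m1, m2}"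
proof -
  let ?c = "conductor \<Gamma>" and ?e = "multiplicity_ns \<Gamma>"
  consider "m1 \<noteq> m2 - e'" | "m1 = m2 - e'" "?c \<le> m1 - 2 * e'"
    | "m1 = ?c - 1 + 2 * e'" "m2 = ?c - 1 + 3 * e'"
    using m1 m2 by linarith
  then show ?thesis
  proof cases
    case 1
    moreover have "e' < m2 - e'" using c_pos m1(2) m2(2) by linarith
    moreover have "m2 - e' < m2" using e'_nonzero e'_less_m1 m2(2) by linarith
    ultimately show ?thesis using that[of "m2 - e'"] D_set_union_contains by auto
  next
    case 2
    have "0 \<in> \<Gamma>" "m1 - 2 * e' \<in> \<Gamma>"
      using ns conductor_le_mem[OF ns] 2 unfolding numerical_semigroup_def by auto
    then have "(m1 - 2 * e') + e' \<in> D_set (shifted_sg \<Gamma> e') ((m1 - 2 * e') + 0 + 2 * e')"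
      using add_mem_D_set_shifted_sg by blast
    moreover have "m1 - 2 * e' + 2 * e' = m1" "m1 - 2 * e' + e' = m1 - e'"
      using m1 c_pos by auto
    ultimately have "m1 - e' \<in> U" by simp
    moreover have "e' < m1 - e'" "m1 - e' < m1" using 2 c_pos e'_nonzero by linarith+
    ultimately show ?thesis using that[of "m1 - e'"] m2(2) by auto
  next
    case 3
    have "?e \<in> \<Gamma>" "?e \<noteq> 0" using multiplicity_ns_mem[OF ns] by auto
    moreover have "?c - 1 + e' - ?e \<in> \<Gamma>"
      using conductor_le_mem[OF ns] assms c_pos by simp
    ultimately have "?e + e' \<in> D_set (shifted_sg \<Gamma> e') (?e + (?c - 1 + e' - ?e) + 2 * e')"
      using add_mem_D_set_shifted_sg by blast
    moreover have "?e + (?c - 1 + e' - ?e) + 2 * e' = m2" using 3 assms c_pos by simp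
    ultimately have "?e + e' \<in> U" by simp
    moreover have "e' < ?e + e'" "?e + e' < m1" using 3 assms c_pos \<open>?e \<noteq> 0\<close> by linarith+
    ultimately show ?thesis using that[of "?e + e'"] m2(2) by auto
  qed
qed

lemma card_D_set_union_ge_5:
  assumes "multiplicity_ns \<Gamma> < e'"
  shows "5 \<le> card U"
proof -
  obtain y where y: "y \<in> U" "y \<notin> {0, e', m1, m2}"
    using D_set_union_fifth_element[OF assms] .
  have "card (insert y {0, e', m1, m2}) \<le> card U"
    using D_set_union_contains y(1) by (intro card_mono) (auto simp: finite_D_set)
  moreover have "card (insert y {0, e', m1, m2}) = 5"
    using y(2) e'_nonzero e'_less_m1 m2(2) by auto
  ultimately show ?thesis by simp
qed

end

lemma delta2_eqI:
  assumes "m1 \<in> S" "m2 \<in> S" "m \<le> m1" "m1 < m2" "card (D_set S m1 \<union> D_set S m2) = k"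
    and "\<And>m1 m2. m1 \<in> S \<Longrightarrow> m2 \<in> S \<Longrightarrow> m \<le> m1 \<Longrightarrow> m1 < m2
           \<Longrightarrow> k \<le> card (D_set S m1 \<union> D_set S m2)"
  shows "delta2 S m = k"
  unfolding delta2_def using assms by (intro Least_equality) blast+

theorem lemma4p10:
  fixes \<Gamma> :: "nat set" and e e' c :: nat
  assumes "numerical_semigroup \<Gamma>" and "arf \<Gamma>"
    and "e = multiplicity_ns \<Gamma>" and "e > 1"
    and "c = conductor \<Gamma>"
    and "e' \<in> \<Gamma>" and "e' \<noteq> 0"
  shows "delta2 (shifted_sg \<Gamma> e') ((c + e') + e' - 1) = (if e' = e then 4 else 5)"
proof -
  let ?S = "shifted_sg \<Gamma> e'"
  have c_pos: "0 < c" using conductor_pos assms by blast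
  have "e \<le> e'" using multiplicity_ns_le assms by blast
  have "e \<noteq> 0" using multiplicity_ns_mem assms by auto
  define v where "v = (c - 1 + e) + e'"
  define w1 where "w1 = c - 1 + 2 * e'"
  define w2 where "w2 = (c - 1 + e) + 2 * e'"
  have "D_set ?S w1 \<union> D_set ?S w2 = {0, e', v, w1, w2}"
    using D_set_shifted_sg_conductor D_set_shifted_sg_conductor_plus_multiplicity c_pos assms
    unfolding v_def w1_def w2_def by auto
  moreover have "card {0, e', v, w1, w2} = (if e' = e then 4 else 5)"
  proof -
    have "0 < e'" "e' < v" "v \<le> w1" "w1 < w2" "v = w1 \<longleftrightarrow> e' = e"
      using \<open>e \<le> e'\<close> \<open>e \<noteq> 0\<close> c_pos assms(7) unfolding v_def w1_def w2_def by auto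
    then show ?thesis by (cases "e' = e") auto
  qed
  moreover have "w1 \<in> ?S" "w2 \<in> ?S"
    using conductor_le_mem assms(1,5,7) c_pos unfolding w1_def w2_def mem_shifted_sg by auto
  moreover have "c + e' + e' - 1 \<le> w1" "w1 < w2"
    using c_pos \<open>e \<noteq> 0\<close> unfolding w1_def w2_def by auto
  ultimately show ?thesis
    using card_D_set_union_ge_4 card_D_set_union_ge_5 c_pos \<open>e \<le> e'\<close> assms(1,3,5,7)
    by (intro delta2_eqI[of w1 _ w2]) auto
qed

end
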